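(* Let $\Sigma$ be a first-order language and let $\mathcal{T}_{\Sigma,\infty}$ be the family of all complete theories in $\Sigma$ having infinite models. If $\Sigma$ is finite and contains no predicate symbols of arity $m\ge 2$ and no function symbols of arity $n\ge 1$, then ${\rm RS}(\mathcal{T}_{\Sigma,\infty})$ is finite (a natural number); otherwise ${\rm RS}(\mathcal{T}_{\Sigma,\infty})=\infty$.
   Context: Theories are complete consistent first-order theories; structures have nonempty universes. Function symbols (constants being $0$-ary function symbols) are treated via their graphs: each $n$-ary function symbol $f$ is replaced by an $(n+1)$-ary predicate $R_f=\{(\bar a,b)\mid f(\bar a)=b\}$, and sentences are those of the resulting relational language. For a family $\mathcal{T}$ of theories and a sentence $\varphi$ of its language, $\mathcal{T}_\varphi=\{T\in\mathcal{T}\mid\varphi\in T\}$. The rank ${\rm RS}$ of a family is defined as follows: ${\rm RS}(\emptyset)=-1$; ${\rm RS}(\mathcal{T})=0$ for finite nonempty $\mathcal{T}$; ${\rm RS}(\mathcal{T})\ge 1$ for infinite $\mathcal{T}$; for $\alpha=\beta+1$, ${\rm RS}(\mathcal{T})\ge\alpha$ iff there are pairwise inconsistent sentences $\varphi_k$, $k\in\omega$, of the language of $\mathcal{T}$ with ${\rm RS}(\mathcal{T}_{\varphi_k})\ge\beta$ for all $k$; for limit $\alpha$, ${\rm RS}(\mathcal{T})\ge\alpha$ iff ${\rm RS}(\mathcal{T})\ge\beta$ for all $\beta<\alpha$; ${\rm RS}(\mathcal{T})=\alpha$ iff ${\rm RS}(\mathcal{T})\ge\alpha$ and not ${\rm RS}(\mathcal{T})\ge\alpha+1$;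 ${\rm RS}(\mathcal{T})=\infty$ if ${\rm RS}(\mathcal{T})\ge\alpha$ for every ordinal $\alpha$. *)

theory Defs
  imports Main
begin

text \<open>Sentences are
those of the relational language in which each f \<in> F is replaced by the
(farr f + 1)-ary predicate R_f (symbol Inr f); predicate symbols are Inl p.
First-order logic with equality; variables are natural numbers.\<close>

datatype ('p, 'f) fm =
    Eq nat nat
  | Rel "'p + 'f" "nat list"
  | Neg "('p, 'f) fm"
  | Conj "('p, 'f) fm" "('p, 'f) fm"
  | Ex nat "('p, 'f) fm"

fun fv :: "('p, 'f) fm \<Rightarrow> nat set" where
  "fv (Eq x y) = {x, y}"
| "fv (Rel s xs) = set xs"
| "fv (Neg \<phi>) = fv \<phi>"
| "fv (Conj \<phi> \<psi>) = fv \<phi> \<union> fv \<psi>"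
| "fv (Ex x \<phi>) = fv \<phi> - {x}"

fun wf_fm :: "'p set \<Rightarrow> 'f set \<Rightarrow> ('p \<Rightarrow> nat) \<Rightarrow> ('f \<Rightarrow> nat) \<Rightarrow> ('p, 'f) fm \<Rightarrow> bool" where
  "wf_fm P F parr farr (Eq x y) = True"
| "wf_fm P F parr farr (Rel (Inl p) xs) = (p \<in> P \<and> length xs = parr p)"
| "wf_fm P F parr farr (Rel (Inr f) xs) = (f \<in> F \<and> length xs = Suc (farr f))"
| "wf_fm P F parr farr (Neg \<phi>) = wf_fm P F parr farr \<phi>"
| "wf_fm P F parr farr (Conj \<phi> \<psi>) = (wf_fm P F parr farr \<phi> \<and> wf_fm P F parr farr \<psi>)"
| "wf_fm P F parr farr (Ex x \<phi>) = wf_fm P F parr farr \<phi>"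

definition sentence :: "'p set \<Rightarrow> 'f set \<Rightarrow> ('p \<Rightarrow> nat) \<Rightarrow> ('f \<Rightarrow> nat) \<Rightarrow> ('p, 'f) fm \<Rightarrow> bool" where
  "sentence P F parr farr \<phi> \<longleftrightarrow> wf_fm P F parr farr \<phi> \<and> fv \<phi> = {}"

record ('u, 'p, 'f) struc =
  univ :: "'u set"
  preds :: "'p \<Rightarrow> 'u list \<Rightarrow> bool"
  funs :: "'f \<Rightarrow> 'u list \<Rightarrow> 'u"

definition is_struc :: "'f set \<Rightarrow> ('f \<Rightarrow> nat) \<Rightarrow> ('u, 'p, 'f) struc \<Rightarrow> bool" where
  "is_struc F farr M \<longleftrightarrow> univ M \<noteq> {} \<and>
     (\<forall>f\<in>F. \<forall>as. set as \<subseteq> univ M \<and> length as = farr f \<longrightarrow> funs M f as \<in> univ M)"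

fun sat :: "('u, 'p, 'f) struc \<Rightarrow> (nat \<Rightarrow> 'u) \<Rightarrow> ('p, 'f) fm \<Rightarrow> bool" where
  "sat M e (Eq x y) = (e x = e y)"
| "sat M e (Rel (Inl p) xs) = preds M p (map e xs)"
| "sat M e (Rel (Inr f) xs) = (xs \<noteq> [] \<and> funs M f (map e (butlast xs)) = e (last xs))"
| "sat M e (Neg \<phi>) = (\<not> sat M e \<phi>)"
| "sat M e (Conj \<phi> \<psi>) = (sat M e \<phi> \<and> sat M e \<psi>)"
| "sat M e (Ex x \<phi>) = (\<exists>a\<in>univ M. sat M (e(x := a)) \<phi>)"

definition models :: "('u, 'p, 'f) struc \<Rightarrow> ('p, 'f) fm \<Rightarrow> bool" where
  "models M \<phi> \<longleftrightarrow> (\<forall>e. range e \<subseteq> univ M \<longrightarrow> sat M e \<phi>)"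

text \<open>Universes of structures are taken inside the fixed type below, whose cardinality
is |P| + |F| + aleph_0 or more; by the downward Loewenheim-Skolem theorem every
consistent set of sentences has a model of this kind, and every complete theory
with an infinite model has an infinite model of this kind.\<close>
type_synonym ('p, 'f) U = "'p + 'f + nat"

definition Th :: "'p set \<Rightarrow> 'f set \<Rightarrow> ('p \<Rightarrow> nat) \<Rightarrow> ('f \<Rightarrow> nat)
    \<Rightarrow> ('u, 'p, 'f) struc \<Rightarrow> ('p, 'f) fm set" where
  "Th P F parr farr M = {\<phi>. sentence P F parr farr \<phi> \<and> models M \<phi>}"

definition T_inf :: "'p set \<Rightarrow> 'f set \<Rightarrow> ('p \<Rightarrow> nat) \<Rightarrow> ('f \<Rightarrow> nat) \<Rightarrow> ('p, 'f) fm set set" where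
  "T_inf P F parr farr =
     {Th P F parr farr M | M :: (('p, 'f) U, 'p, 'f) struc. is_struc F farr M \<and> infinite (univ M)}"

definition inconsistent :: "'p set \<Rightarrow> 'f set \<Rightarrow> ('p \<Rightarrow> nat) \<Rightarrow> ('f \<Rightarrow> nat)
    \<Rightarrow> ('p, 'f) fm \<Rightarrow> ('p, 'f) fm \<Rightarrow> bool" where
  "inconsistent P F parr farr \<phi> \<psi> \<longleftrightarrow>
     \<not> (\<exists>M :: (('p, 'f) U, 'p, 'f) struc. is_struc F farr M \<and> models M \<phi> \<and> models M \<psi>)"

definition restrict_fam :: "('p, 'f) fm set set \<Rightarrow> ('p, 'f) fm \<Rightarrow> ('p, 'f) fm set set" where
  "restrict_fam \<T> \<phi> = {T \<in> \<T>. \<phi> \<in> T}"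

definition is_zero :: "'o::wellorder \<Rightarrow> bool" where
  "is_zero \<alpha> \<longleftrightarrow> (\<forall>\<gamma>. \<alpha> \<le> \<gamma>)"

definition is_succ_of :: "'o::wellorder \<Rightarrow> 'o \<Rightarrow> bool" where
  "is_succ_of \<beta> \<alpha> \<longleftrightarrow> \<beta> < \<alpha> \<and> (\<forall>\<gamma>. \<beta> < \<gamma> \<longrightarrow> \<alpha> \<le> \<gamma>)"

text \<open>This is a recursion on the
well-order; written as an inductive predicate, whose least fixed point coincides
with the recursively defined relation.\<close>
inductive RS_ge :: "'p set \<Rightarrow> 'f set \<Rightarrow> ('p \<Rightarrow> nat) \<Rightarrow> ('f \<Rightarrow> nat)
    \<Rightarrow> ('p, 'f) fm set set \<Rightarrow> 'o::wellorder \<Rightarrow> bool"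
  for P F parr farr where
  zero: "is_zero (\<alpha>::'o::wellorder) \<Longrightarrow> \<T> \<noteq> {} \<Longrightarrow> RS_ge P F parr farr \<T> \<alpha>"
| one: "is_zero (\<beta>::'o::wellorder) \<Longrightarrow> is_succ_of \<beta> \<alpha> \<Longrightarrow> infinite \<T> \<Longrightarrow> RS_ge P F parr farr \<T> \<alpha>"
| succ: "is_succ_of (\<beta>::'o::wellorder) \<alpha> \<Longrightarrow> \<not> is_zero \<beta> \<Longrightarrow>
     (\<forall>k::nat. sentence P F parr farr (\<phi> k)) \<Longrightarrow>
     (\<forall>i j. i \<noteq> j \<longrightarrow> inconsistent P F parr farr (\<phi> i) (\<phi> j)) \<Longrightarrow>
     (\<forall>k. RS_ge P F parr farr (restrict_fam \<T> (\<phi> k)) \<beta>) \<Longrightarrow> RS_ge P F parr farr \<T> \<alpha>"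
| limit: "\<not> is_zero (\<alpha>::'o::wellorder) \<Longrightarrow> \<not> (\<exists>\<beta>. is_succ_of \<beta> \<alpha>) \<Longrightarrow>
     (\<forall>\<beta><\<alpha>. RS_ge P F parr farr \<T> \<beta>) \<Longrightarrow> RS_ge P F parr farr \<T> \<alpha>"

end

theory Submission
  imports Defs "HOL-Computational_Algebra.Primes" "HOL-Library.Nat_Bijection" "HOL-Library.Extended_Nat"
begin

text \<open>If \<open>\<Sigma>\<close> has infinitely many symbols, a predicate of arity at least 2 or a function symbol of
  positive arity, there are sentences \<open>\<psi>\<^sub>0, \<psi>\<^sub>1, \<dots>\<close> all of whose Boolean combinations hold in
  infinite models: \<open>\<psi>\<^sub>i\<close> speaks about the \<open>i\<close>-th symbol, or says that a definable unary function
  \<open>g\<close> satisfies \<open>g\<^sup>p x = x\<close> for some \<open>x\<close>, where \<open>p\<close> is the \<open>i\<close>-th prime.  Splitting the family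
  of theories along these combinations never stops, so its rank is \<open>\<infinity>\<close>.

  Otherwise a structure is described by the set of nullary predicates that hold and, for each of
  the finitely many colours (the unary predicates an element satisfies and the constants it names),
  the number of elements of that colour in \<open>\<nat> \<union> {\<infinity>}\<close>.  By an Ehrenfeucht-Fraisse argument a
  sentence of quantifier depth \<open>q\<close> sees these numbers only up to \<open>q\<close>, so theories correspond to
  points of a compact space of invariants.  An infinite set of invariants with at least \<open>m\<close>
  infinite counts each has a limit point with at least \<open>m + 1\<close> of them; hence, by induction on the
  rank, \<open>RS \<ge> k + 1\<close> forces a limit invariant with \<open>k + 2\<close> infinite counts, and the number of
  colours bounds the rank.\<close>

lemma sat_cong:
  assumes "\<And>x. x \<in> fv \<phi> \<Longrightarrow> e x = e' x"
  shows "sat M e \<phi> = sat M e' \<phi>"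
  using assms
proof (induction \<phi> arbitrary: e e')
  case (Rel s xs)
  then have "map e xs = map e' xs" by simp
  moreover have "map e (butlast xs) = map e' (butlast xs)"
    using calculation by (metis map_butlast)
  moreover have "xs \<noteq> [] \<Longrightarrow> e (last xs) = e' (last xs)"
    using Rel.prems by simp
  ultimately show ?case by (cases s; cases "xs = []") (simp_all del: map_eq_conv)
next
  case (Neg \<phi>)
  then show ?case by (metis fv.simps(3) sat.simps(4))
next
  case (Conj \<phi> \<psi>)
  then show ?case by (metis UnCI fv.simps(4) sat.simps(5))
next
  case (Ex x \<phi>)
  have "sat M (e(x := a)) \<phi> = sat M (e'(x := a)) \<phi>" for a
    by (rule Ex.IH) (use Ex.prems in auto)
  then show ?case by simp
qed simp

lemma models_iff_sat:
  assumes "fv \<phi> = {}" "range e \<subseteq> univ M"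
  shows "models M \<phi> \<longleftrightarrow> sat M e \<phi>"
  using assms sat_cong[of \<phi> e] unfolding models_def by auto

lemma models_Neg:
  assumes "fv \<phi> = {}" "univ M \<noteq> {}"
  shows "models M (Neg \<phi>) \<longleftrightarrow> \<not> models M \<phi>"
proof -
  obtain a where "a \<in> univ M" using assms(2) by blast
  then have "range (\<lambda>_. a) \<subseteq> univ M" by blast
  with assms(1) show ?thesis
    using models_iff_sat[of "Neg \<phi>" "\<lambda>_. a" M] models_iff_sat[of \<phi> "\<lambda>_. a" M] by simp
qed

lemma models_Conj: "models M (Conj \<phi> \<psi>) \<longleftrightarrow> models M \<phi> \<and> models M \<psi>"
  unfolding models_def by auto

lemma T_inf_consistent:
  assumes "T \<in> T_inf P F parr farr" "\<phi> \<in> T" "\<psi> \<in> T"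
  shows "\<not> inconsistent P F parr farr \<phi> \<psi>"
  using assms unfolding T_inf_def Th_def inconsistent_def by blast

lemma infinite_UNIV_U: "infinite (UNIV :: ('p, 'f) U set)"
  by (simp add: infinite_UNIV_char_0)

lemma is_struc_UNIV: "is_struc F farr \<lparr>univ = UNIV, preds = ps, funs = fs\<rparr>"
  by (simp add: is_struc_def)

lemma T_inf_nonempty: "T_inf P F parr farr \<noteq> {}"
proof -
  let ?M = "\<lparr>univ = UNIV, preds = \<lambda>_ _. False, funs = \<lambda>_ _. undefined\<rparr> :: (('p, 'f) U, 'p, 'f) struc"
  have "is_struc F farr ?M" "infinite (univ ?M)"
    by (simp_all add: is_struc_UNIV infinite_UNIV_U)
  then show ?thesis unfolding T_inf_def by blast
qed

section \<open>Rank \<open>\<infinity>\<close> from an independent family of sentences\<close>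

lemma infinite_if_inconsistent_parts:
  fixes \<chi> :: "nat \<Rightarrow> ('p, 'f) fm"
  assumes "\<T> \<subseteq> T_inf P F parr farr"
    and "\<And>i j. i \<noteq> j \<Longrightarrow> inconsistent P F parr farr (\<chi> i) (\<chi> j)"
    and "\<And>k. restrict_fam \<T> (\<chi> k) \<noteq> {}"
  shows "infinite \<T>"
proof -
  have "\<exists>T. T \<in> \<T> \<and> \<chi> k \<in> T" for k
    using assms(3)[of k] unfolding restrict_fam_def by blast
  then obtain t where t: "t k \<in> \<T>" "\<chi> k \<in> t k" for k
    by metis
  have "inj t"
  proof (rule injI, rule ccontr)
    fix i j
    assume "t i = t j" "i \<noteq> j"
    then show False
      using T_inf_consistent[of "t i"] assms(1,2) t by (metis subsetD)
  qed
  then have "infinite (range t)"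
    by (rule range_inj_infinite)
  moreover have "range t \<subseteq> \<T>"
    using t(1) by blast
  ultimately show ?thesis
    using finite_subset by blast
qed

lemma RS_ge_if_splits_forever:
  fixes Ts :: "'n \<Rightarrow> ('p, 'f) fm set set" and \<chi> :: "'n \<Rightarrow> nat \<Rightarrow> ('p, 'f) fm"
  assumes sub: "\<And>n. Ts n \<subseteq> T_inf P F parr farr"
    and ne: "\<And>n. Ts n \<noteq> {}"
    and sent: "\<And>n k. sentence P F parr farr (\<chi> n k)"
    and incons: "\<And>n i j. i \<noteq> j \<Longrightarrow> inconsistent P F parr farr (\<chi> n i) (\<chi> n j)"
    and parts: "\<And>n k. restrict_fam (Ts n) (\<chi> n k) = Ts (c n k)"
  shows "RS_ge P F parr farr (Ts n) (\<alpha>::'o::wellorder)"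
proof -
  have infinite: "infinite (Ts n)" for n
    by (rule infinite_if_inconsistent_parts[where P = P and F = F and parr = parr and farr = farr
          and \<chi> = "\<chi> n"]) (simp_all add: sub incons parts ne)
  show ?thesis
  proof (induction \<alpha> arbitrary: n rule: less_induct)
    case (less \<alpha>)
    consider "is_zero \<alpha>" | \<beta> where "is_succ_of \<beta> \<alpha>" | "\<not> is_zero \<alpha>" "\<nexists>\<beta>. is_succ_of \<beta> \<alpha>"
      by blast
    then show ?case
    proof cases
      case 1
      then show ?thesis using ne by (rule RS_ge.zero)
    next
      case (2 \<beta>)
      show ?thesis
      proof (cases "is_zero \<beta>")
        case True
        then show ?thesis using 2 infinite by (rule RS_ge.one)
      next
        case False
        have "\<beta> < \<alpha>" using 2 by (simp add: is_succ_of_def)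
        then have "\<forall>k. RS_ge P F parr farr (restrict_fam (Ts n) (\<chi> n k)) \<beta>"
          by (simp add: parts less.IH)
        with 2 False sent incons show ?thesis by (intro RS_ge.succ) auto
      qed
    next
      case 3
      then show ?thesis by (intro RS_ge.limit) (simp_all add: less.IH)
    qed
  qed
qed

definition fm_true :: "('p, 'f) fm" where
  "fm_true = Ex 0 (Eq 0 0)"

fun pattern :: "(nat \<Rightarrow> ('p, 'f) fm) \<Rightarrow> bool list \<Rightarrow> ('p, 'f) fm" where
  "pattern \<psi> [] = fm_true"
| "pattern \<psi> (b # bs) = Conj (if b then \<psi> 0 else Neg (\<psi> 0)) (pattern (\<psi> \<circ> Suc) bs)"

lemma sentence_pattern:
  "(\<And>i. sentence P F parr farr (\<psi> i)) \<Longrightarrow> sentence P F parr farr (pattern \<psi> bs)"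
  by (induction bs arbitrary: \<psi>) (auto simp: sentence_def fm_true_def)

lemma models_pattern:
  assumes "\<And>i. fv (\<psi> i) = {}" "univ M \<noteq> {}"
  shows "models M (pattern \<psi> bs) \<longleftrightarrow> (\<forall>i<length bs. models M (\<psi> i) = bs ! i)"
  using assms(1)
proof (induction bs arbitrary: \<psi>)
  case Nil
  then show ?case using assms(2) by (auto simp: models_def fm_true_def)
next
  case (Cons b bs)
  then show ?case by (auto simp: models_Conj models_Neg assms(2) All_less_Suc2)
qed

lemma pattern_in_Th_iff:
  assumes "\<And>i. sentence P F parr farr (\<psi> i)" "is_struc F farr M"
  shows "pattern \<psi> L \<in> Th P F parr farr M \<longleftrightarrow> (\<forall>i<length L. models M (\<psi> i) = L ! i)"
  using assms sentence_pattern[of P F parr farr \<psi> L] models_pattern[of \<psi> M L]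
  by (simp add: Th_def is_struc_def sentence_def)

lemma inconsistent_patterns:
  fixes \<psi> :: "nat \<Rightarrow> ('p, 'f) fm"
  assumes sent: "\<And>i. sentence P F parr farr (\<psi> i)" and "i \<noteq> j"
  shows "inconsistent P F parr farr (pattern \<psi> (L @ replicate i False @ [True]))
           (pattern \<psi> (L @ replicate j False @ [True]))"
proof -
  have False if M: "is_struc F farr M" "models M (pattern \<psi> (L @ replicate i False @ [True]))"
      "models M (pattern \<psi> (L @ replicate j False @ [True]))" for M :: "(('p, 'f) U, 'p, 'f) struc"
  proof -
    have flag: "models M (\<psi> (length L + n)) \<longleftrightarrow> n = k"
      if "models M (pattern \<psi> (L @ replicate k False @ [True]))" "n \<le> k" for n k
    proof -
      have "pattern \<psi> (L @ replicate k False @ [True]) \<in> Th P F parr farr M"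
        using that(1) sentence_pattern[OF sent] by (simp add: Th_def)
      from this[unfolded pattern_in_Th_iff[OF sent M(1)], rule_format, of "length L + n"]
      show ?thesis using \<open>n \<le> k\<close> by (simp add: nth_append)
    qed
    from flag[OF M(2) min.cobounded1[of i j]] flag[OF M(3) min.cobounded2[of i j]] \<open>i \<noteq> j\<close>
    show False by (simp add: min_def split: if_splits)
  qed
  then show ?thesis unfolding inconsistent_def by blast
qed

text \<open>The family splits along the tree of patterns: the node \<open>L\<close> has the children
  \<open>L @ replicate k False @ [True]\<close>, \<open>k \<in> \<nat>\<close>.\<close>
lemma RS_ge_T_inf_if_independent:
  fixes \<psi> :: "nat \<Rightarrow> ('p, 'f) fm"
  assumes sent: "\<And>i. sentence P F parr farr (\<psi> i)"
    and indep: "\<And>S. \<exists>M :: (('p, 'f) U, 'p, 'f) struc. is_struc F farr M \<and> infinite (univ M)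
                   \<and> (\<forall>i. models M (\<psi> i) \<longleftrightarrow> i \<in> S)"
  shows "RS_ge P F parr farr (T_inf P F parr farr) (\<alpha>::'o::wellorder)"
proof -
  let ?T = "T_inf P F parr farr"
  let ?matches = "\<lambda>M L. \<forall>i<length L. models M (\<psi> i) = L ! i"
  define Ts where "Ts L = restrict_fam ?T (pattern \<psi> L)" for L
  define child where "child L k = L @ replicate k False @ [True]" for L k
  have Ts_iff: "T \<in> Ts L \<longleftrightarrow> (\<exists>M :: (('p, 'f) U, 'p, 'f) struc. is_struc F farr M
      \<and> infinite (univ M) \<and> T = Th P F parr farr M \<and> ?matches M L)" for T L
  proof -
    have "pattern \<psi> L \<in> Th P F parr farr M \<longleftrightarrow> ?matches M L"
      if "is_struc F farr M" for M :: "(('p, 'f) U, 'p, 'f) struc"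
      using pattern_in_Th_iff[OF sent that] .
    then show ?thesis
      unfolding Ts_def restrict_fam_def T_inf_def by blast
  qed
  have "Ts (child L k) \<subseteq> Ts L" for L k
  proof
    fix T
    assume "T \<in> Ts (child L k)"
    then obtain M :: "(('p, 'f) U, 'p, 'f) struc" where "is_struc F farr M" "infinite (univ M)"
        "T = Th P F parr farr M" "?matches M (child L k)"
      using Ts_iff[of T "child L k"] by blast
    moreover from \<open>?matches M (child L k)\<close> have "?matches M L"
      by (auto simp: child_def nth_append)
    ultimately show "T \<in> Ts L" using Ts_iff[of T L] by blast
  qed
  then have Ts_child: "restrict_fam (Ts L) (pattern \<psi> (child L k)) = Ts (child L k)" for L k
    by (fastforce simp: Ts_def restrict_fam_def)
  have "RS_ge P F parr farr (Ts L) \<alpha>" for L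
  proof (rule RS_ge_if_splits_forever[where Ts = Ts and \<chi> = "\<lambda>L k. pattern \<psi> (child L k)"
        and c = child])
    show "Ts L \<subseteq> ?T" for L
      by (simp add: Ts_def restrict_fam_def)
    show "Ts L \<noteq> {}" for L
    proof -
      obtain M :: "(('p, 'f) U, 'p, 'f) struc" where M: "is_struc F farr M" "infinite (univ M)"
          "\<forall>i. models M (\<psi> i) \<longleftrightarrow> i \<in> {i. i < length L \<and> L ! i}"
        using indep by blast
      then have "?matches M L" by simp
      with M(1,2) show ?thesis using Ts_iff[of "Th P F parr farr M" L] by blast
    qed
    show "sentence P F parr farr (pattern \<psi> (child L k))" for L k
      using sentence_pattern[OF sent] .
    show "inconsistent P F parr farr (pattern \<psi> (child L i)) (pattern \<psi> (child L j))"
      if "i \<noteq> j" for L i j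
      unfolding child_def using sent that by (rule inconsistent_patterns)
  qed (rule Ts_child)
  moreover have "Ts [] = ?T"
    by (rule set_eqI) (auto simp: Ts_iff T_inf_def)
  ultimately show ?thesis by metis
qed

lemma RS_ge_T_inf_if_infinite_preds:
  fixes P :: "'p set" and F :: "'f set"
  assumes "infinite P"
  shows "RS_ge P F parr farr (T_inf P F parr farr) (\<alpha>::'o::wellorder)"
proof -
  obtain pp :: "nat \<Rightarrow> 'p" where pp: "inj pp" "range pp \<subseteq> P"
    using infinite_countable_subset[OF assms] by blast
  define \<psi> :: "nat \<Rightarrow> ('p, 'f) fm" where
    "\<psi> i = Ex 0 (Rel (Inl (pp i)) (replicate (parr (pp i)) 0))" for i
  show ?thesis
  proof (rule RS_ge_T_inf_if_independent)
    show "sentence P F parr farr (\<psi> i)" for i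
      using pp(2) by (auto simp: \<psi>_def sentence_def)
    fix S
    define M :: "(('p, 'f) U, 'p, 'f) struc" where
      "M = \<lparr>univ = UNIV, preds = \<lambda>p _. \<exists>i\<in>S. p = pp i, funs = \<lambda>_ _. undefined\<rparr>"
    have "models M (\<psi> i) \<longleftrightarrow> i \<in> S" for i
      using injD[OF pp(1)] by (auto simp: M_def \<psi>_def models_def)
    moreover have "is_struc F farr M" "infinite (univ M)"
      by (simp_all add: M_def is_struc_UNIV infinite_UNIV_U)
    ultimately show "\<exists>M :: (('p, 'f) U, 'p, 'f) struc. is_struc F farr M \<and> infinite (univ M)
        \<and> (\<forall>i. models M (\<psi> i) \<longleftrightarrow> i \<in> S)"
      by blast
  qed
qed

definition graph_fm :: "'f \<Rightarrow> nat \<Rightarrow> nat \<Rightarrow> nat \<Rightarrow> ('p, 'f) fm" where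
  "graph_fm f n x y = Rel (Inr f) (replicate n x @ [y])"

lemma sat_graph_fm: "sat M e (graph_fm f n x y) \<longleftrightarrow> funs M f (replicate n (e x)) = e y"
  by (simp add: graph_fm_def butlast_append)

lemma fv_graph_fm: "fv (graph_fm f n x y) \<subseteq> {x, y}"
  by (auto simp: graph_fm_def)

lemma wf_graph_fm: "f \<in> F \<Longrightarrow> wf_fm P F parr farr (graph_fm f (farr f) x y)"
  by (simp add: graph_fm_def)

lemma RS_ge_T_inf_if_infinite_funs:
  fixes P :: "'p set" and F :: "'f set"
  assumes "infinite F"
  shows "RS_ge P F parr farr (T_inf P F parr farr) (\<alpha>::'o::wellorder)"
proof -
  obtain ff :: "nat \<Rightarrow> 'f" where ff: "inj ff" "range ff \<subseteq> F"
    using infinite_countable_subset[OF assms] by blast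
  let ?A = "\<lambda>f. graph_fm f (farr f) 1 0 :: ('p, 'f) fm"
  define \<psi> :: "nat \<Rightarrow> ('p, 'f) fm" where
    "\<psi> i = Ex 0 (Ex 1 (Conj (?A (ff 0)) (?A (ff (Suc i)))))" for i
  show ?thesis
  proof (rule RS_ge_T_inf_if_independent)
    show "sentence P F parr farr (\<psi> i)" for i
    proof -
      have "fv (?A f) \<subseteq> {0, 1}" for f
        using fv_graph_fm[of f _ 1 0] by blast
      then show ?thesis
        using ff(2) by (auto simp: \<psi>_def sentence_def intro!: wf_graph_fm)
    qed
    fix S
    define M :: "(('p, 'f) U, 'p, 'f) struc" where
      "M = \<lparr>univ = UNIV, preds = \<lambda>_ _. False,
            funs = \<lambda>f _. Inr (Inr (if f \<in> ff ` Suc ` (- S) then 1 else 0))\<rparr>"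
    have "ff 0 \<notin> ff ` Suc ` (- S)" "ff (Suc i) \<in> ff ` Suc ` (- S) \<longleftrightarrow> i \<notin> S" for i
      using injD[OF ff(1)] by auto
    then have "models M (\<psi> i) \<longleftrightarrow> i \<in> S" for i
      unfolding models_def \<psi>_def by (simp add: M_def sat_graph_fm)
    moreover have "is_struc F farr M" "infinite (univ M)"
      by (simp_all add: M_def is_struc_UNIV infinite_UNIV_U)
    ultimately show "\<exists>M :: (('p, 'f) U, 'p, 'f) struc. is_struc F farr M \<and> infinite (univ M)
        \<and> (\<forall>i. models M (\<psi> i) \<longleftrightarrow> i \<in> S)"
      by blast
  qed
qed

text \<open>If \<open>A x y\<close> says \<open>y = g x\<close>, then \<open>iter_fm A m x\<close> says \<open>g\<^sup>m x = v\<^sub>0\<close>; the intermediate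
  values alternate between the variables 1 and 2.\<close>
fun iter_fm :: "(nat \<Rightarrow> nat \<Rightarrow> ('p, 'f) fm) \<Rightarrow> nat \<Rightarrow> nat \<Rightarrow> ('p, 'f) fm" where
  "iter_fm A 0 x = Eq x 0"
| "iter_fm A (Suc m) x =
     Ex (if x = 1 then 2 else 1) (Conj (A x (if x = 1 then 2 else 1)) (iter_fm A m (if x = 1 then 2 else 1)))"

lemma sat_iter_fm:
  assumes "\<And>e x y. sat M e (A x y) \<longleftrightarrow> g (e x) = e y" "univ M = UNIV"
  shows "sat M e (iter_fm A m x) \<longleftrightarrow> (g ^^ m) (e x) = e 0"
proof (induction m arbitrary: e x)
  case (Suc m)
  define y where "y = (if x = 1 then 2 else (1::nat))"
  have "y \<noteq> x" "y \<noteq> 0" by (auto simp: y_def)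
  then have "sat M e (iter_fm A (Suc m) x) \<longleftrightarrow> (\<exists>a. g (e x) = a \<and> (g ^^ m) a = e 0)"
    by (simp add: assms Suc.IH flip: y_def)
  also have "\<dots> \<longleftrightarrow> (g ^^ Suc m) (e x) = e 0"
    by (metis comp_apply funpow_Suc_right)
  finally show ?case .
qed simp

lemma fv_iter_fm: "(\<And>x y. fv (A x y) \<subseteq> {x, y}) \<Longrightarrow> fv (iter_fm A m x) \<subseteq> {0, x}"
  by (induction m arbitrary: x) fastforce+

lemma wf_iter_fm: "(\<And>x y. wf_fm P F parr farr (A x y)) \<Longrightarrow> wf_fm P F parr farr (iter_fm A m x)"
  by (induction m arbitrary: x) auto

text \<open>On the points \<open>prod_encode (j, r)\<close> of the \<open>nat\<close> part of \<open>U\<close>: for \<open>j \<in> S\<close> the points with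
  \<open>r < q j\<close> form a cycle of length \<open>q j\<close>; every other point of the \<open>nat\<close> part moves up the ray
  \<open>r \<mapsto> r + 1\<close>, and the remaining points are sent into the \<open>nat\<close> part, so neither lies on a cycle.\<close>
definition cycles :: "(nat \<Rightarrow> nat) \<Rightarrow> nat set \<Rightarrow> ('p, 'f) U \<Rightarrow> ('p, 'f) U" where
  "cycles q S x = (case x of
       Inr (Inr n) \<Rightarrow> (case prod_decode n of (j, r) \<Rightarrow>
         Inr (Inr (prod_encode (j, if j \<in> S \<and> r < q j then Suc r mod q j else Suc r))))
     | _ \<Rightarrow> Inr (Inr 0))"

lemma cycles_in_nat_part: "cycles q S x \<in> range (\<lambda>n. Inr (Inr n))"
  by (auto simp: cycles_def split: sum.split prod.split)

lemma funpow_cycles_on_cycle: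
  assumes "j \<in> S" "r < q j"
  shows "(cycles q S ^^ n) (Inr (Inr (prod_encode (j, r))))
       = Inr (Inr (prod_encode (j, (r + n) mod q j)))"
proof (induction n)
  case (Suc n)
  have "(r + n) mod q j < q j" using assms(2) by simp
  with Suc assms show ?case by (simp add: cycles_def mod_Suc_eq)
qed (use assms in simp)

lemma funpow_cycles_off_cycle:
  assumes "\<not> (j \<in> S \<and> r < q j)"
  shows "(cycles q S ^^ n) (Inr (Inr (prod_encode (j, r)))) = Inr (Inr (prod_encode (j, r + n)))"
  by (induction n) (use assms in \<open>auto simp: cycles_def\<close>)

lemma cycles_periodic_point_iff:
  assumes "n > 0" "\<And>j. j \<in> S \<Longrightarrow> q j > 0"
  shows "(\<exists>x :: ('p, 'f) U. (cycles q S ^^ n) x = x) \<longleftrightarrow> (\<exists>j\<in>S. q j dvd n)"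
proof
  assume "\<exists>x :: ('p, 'f) U. (cycles q S ^^ n) x = x"
  then obtain x :: "('p, 'f) U" where x: "(cycles q S ^^ n) x = x" by blast
  obtain k where k: "n = Suc k" using assms(1) gr0_implies_Suc by blast
  have "(cycles q S ^^ Suc k) x \<in> range (\<lambda>m. Inr (Inr m))"
    by (simp add: cycles_in_nat_part)
  then obtain j r where jr: "x = Inr (Inr (prod_encode (j, r)))"
    using x k by (metis prod_decode_inverse rangeE surj_pair)
  show "\<exists>j\<in>S. q j dvd n"
  proof (cases "j \<in> S \<and> r < q j")
    case True
    then have "(cycles q S ^^ n) x = Inr (Inr (prod_encode (j, (r + n) mod q j)))"
      using funpow_cycles_on_cycle[of j S r q n] by (simp add: jr)
    with x jr have "(r + n) mod q j = r mod q j"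
      using True by (metis Inr_inject prod_encode_eq prod.inject mod_less)
    with True show ?thesis by (metis le_add1 mod_eq_dvd_iff_nat add_diff_cancel_left')
  next
    case False
    then have "(cycles q S ^^ n) x = Inr (Inr (prod_encode (j, r + n)))"
      using funpow_cycles_off_cycle[of j S r q n] by (simp add: jr)
    with x jr have "r + n = r"
      by (metis Inr_inject prod_encode_eq prod.inject)
    with assms(1) show ?thesis by simp
  qed
next
  assume "\<exists>j\<in>S. q j dvd n"
  then obtain j where "j \<in> S" "q j dvd n" by blast
  then have "(cycles q S ^^ n) (Inr (Inr (prod_encode (j, 0)))) = Inr (Inr (prod_encode (j, 0)))"
    using funpow_cycles_on_cycle[of j S 0 q n] assms(2) by simp
  then show "\<exists>x :: ('p, 'f) U. (cycles q S ^^ n) x = x" by blast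
qed

lemma inj_primes_dvd_iff:
  assumes "inj q" "range q \<subseteq> {p. prime p}"
  shows "(\<exists>j\<in>S. q j dvd q i) \<longleftrightarrow> i \<in> S"
proof
  assume "\<exists>j\<in>S. q j dvd q i"
  then obtain j where "j \<in> S" "q j dvd q i" by blast
  moreover have "prime (q j)" "prime (q i)"
    using assms(2) by (simp_all add: image_subset_iff)
  ultimately have "q j = q i"
    by (simp add: primes_dvd_imp_eq)
  with \<open>j \<in> S\<close> injD[OF assms(1)] show "i \<in> S" by metis
qed (use dvd_refl in blast)

text \<open>The sentences \<open>\<exists>x. g\<^sup>p x = x\<close>, for \<open>p\<close> ranging over the primes, are independent.\<close>
lemma RS_ge_T_inf_if_graph_definable:
  fixes A :: "nat \<Rightarrow> nat \<Rightarrow> ('p, 'f) fm"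
  assumes wf: "\<And>x y. wf_fm P F parr farr (A x y)"
    and fv: "\<And>x y. fv (A x y) \<subseteq> {x, y}"
    and graph: "\<And>g :: ('p, 'f) U \<Rightarrow> ('p, 'f) U. \<exists>M. is_struc F farr M \<and> univ M = UNIV
                  \<and> (\<forall>e x y. sat M e (A x y) \<longleftrightarrow> g (e x) = e y)"
  shows "RS_ge P F parr farr (T_inf P F parr farr) (\<alpha>::'o::wellorder)"
proof -
  obtain q :: "nat \<Rightarrow> nat" where q: "inj q" "range q \<subseteq> {p. prime p}"
    using infinite_countable_subset[OF primes_infinite] by blast
  have q_pos: "q j > 0" for j
    using q(2) prime_gt_0_nat by blast
  define \<psi> :: "nat \<Rightarrow> ('p, 'f) fm" where "\<psi> i = Ex 0 (iter_fm A (q i) 0)" for i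
  show ?thesis
  proof (rule RS_ge_T_inf_if_independent)
    show "sentence P F parr farr (\<psi> i)" for i
      using fv_iter_fm[OF fv, of "q i" 0] wf_iter_fm[OF wf]
      by (auto simp: \<psi>_def sentence_def)
    fix S
    have "\<exists>M :: (('p, 'f) U, 'p, 'f) struc. is_struc F farr M \<and> univ M = UNIV
        \<and> (\<forall>e x y. sat M e (A x y) \<longleftrightarrow> cycles q S (e x) = e y)"
      using graph[where g = "cycles q S"] by simp
    then obtain M :: "(('p, 'f) U, 'p, 'f) struc" where M: "is_struc F farr M" "univ M = UNIV"
        "\<forall>e x y. sat M e (A x y) \<longleftrightarrow> cycles q S (e x) = e y"
      by (elim exE conjE)
    have "models M (\<psi> i) \<longleftrightarrow> i \<in> S" for i
    proof -
      have "models M (\<psi> i) \<longleftrightarrow> (\<exists>a :: ('p, 'f) U. (cycles q S ^^ q i) a = a)"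
        by (simp add: \<psi>_def models_def sat_iter_fm[OF M(3)[rule_format] M(2)] M(2))
      also have "\<dots> \<longleftrightarrow> (\<exists>j\<in>S. q j dvd q i)"
        by (rule cycles_periodic_point_iff) (simp_all add: q_pos)
      also have "\<dots> \<longleftrightarrow> i \<in> S"
        by (rule inj_primes_dvd_iff[OF q])
      finally show ?thesis .
    qed
    moreover have "infinite (univ M)"
      using M(2) infinite_UNIV_U by simp
    ultimately show "\<exists>M :: (('p, 'f) U, 'p, 'f) struc. is_struc F farr M
        \<and> infinite (univ M) \<and> (\<forall>i. models M (\<psi> i) \<longleftrightarrow> i \<in> S)"
      using M(1) by blast
  qed
qed

lemma RS_ge_T_inf_if_relation:
  fixes P :: "'p set" and F :: "'f set"
  assumes "p \<in> P" "parr p \<ge> 2"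
  shows "RS_ge P F parr farr (T_inf P F parr farr) (\<alpha>::'o::wellorder)"
proof (rule RS_ge_T_inf_if_graph_definable)
  let ?A = "\<lambda>x y. Rel (Inl p) (replicate (parr p - 1) x @ [y]) :: ('p, 'f) fm"
  show "wf_fm P F parr farr (?A x y)" "fv (?A x y) \<subseteq> {x, y}" for x y
    using assms by auto
  fix g :: "('p, 'f) U \<Rightarrow> ('p, 'f) U"
  have "parr p - 1 = Suc (parr p - 2)" using assms(2) by arith
  then show "\<exists>M. is_struc F farr M \<and> univ M = UNIV \<and> (\<forall>e x y. sat M e (?A x y) \<longleftrightarrow> g (e x) = e y)"
    by (intro exI[of _ "\<lparr>univ = UNIV, preds = \<lambda>_ xs. g (hd xs) = last xs, funs = \<lambda>_ _. undefined\<rparr>"])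
      (simp add: is_struc_UNIV)
qed

lemma RS_ge_T_inf_if_function:
  fixes P :: "'p set" and F :: "'f set"
  assumes "f \<in> F" "farr f \<ge> 1"
  shows "RS_ge P F parr farr (T_inf P F parr farr) (\<alpha>::'o::wellorder)"
proof (rule RS_ge_T_inf_if_graph_definable)
  let ?A = "graph_fm f (farr f) :: nat \<Rightarrow> nat \<Rightarrow> ('p, 'f) fm"
  show "wf_fm P F parr farr (?A x y)" "fv (?A x y) \<subseteq> {x, y}" for x y
    using assms(1) by (simp_all add: wf_graph_fm fv_graph_fm)
  fix g :: "('p, 'f) U \<Rightarrow> ('p, 'f) U"
  have "hd (replicate (farr f) a) = a" for a :: "('p, 'f) U"
    using assms(2) by simp
  then show "\<exists>M. is_struc F farr M \<and> univ M = UNIV \<and> (\<forall>e x y. sat M e (?A x y) \<longleftrightarrow> g (e x) = e y)"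
    by (intro exI[of _ "\<lparr>univ = UNIV, preds = \<lambda>_ _. False, funs = \<lambda>_ xs. g (hd xs)\<rparr>"])
      (simp add: is_struc_UNIV sat_graph_fm)
qed

section \<open>Finite rank for languages with nullary and unary predicates and constants\<close>

definition ecard :: "'a set \<Rightarrow> enat" where
  "ecard S = (if finite S then enat (card S) else \<infinity>)"

lemma ecard_insert: "a \<notin> S \<Longrightarrow> ecard (insert a S) = eSuc (ecard S)"
  by (auto simp: ecard_def eSuc_enat)

lemma ecard_eq_0_iff: "ecard S = 0 \<longleftrightarrow> S = {}"
  by (auto simp: ecard_def zero_enat_def)

lemma min_enat_Suc_eSuc_iff:
  "min (enat (Suc q)) (eSuc u) = min (enat (Suc q)) (eSuc v) \<longleftrightarrow> min (enat q) u = min (enat q) v"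
  by (cases u; cases v) (auto simp: eSuc_enat min_def)

lemma min_enat_SucD:
  "min (enat (Suc q)) u = min (enat (Suc q)) v \<Longrightarrow> min (enat q) u = min (enat q) v"
  by (cases u; cases v) (auto simp: min_def split: if_splits)

lemma min_ecard_Diff:
  assumes "a \<in> S \<longleftrightarrow> a' \<in> S'"
    and "min (enat (Suc q)) (ecard S) = min (enat (Suc q)) (ecard S')"
  shows "min (enat q) (ecard (S - {a})) = min (enat q) (ecard (S' - {a'}))"
proof (cases "a \<in> S")
  case True
  with assms have "ecard S = eSuc (ecard (S - {a}))" "ecard S' = eSuc (ecard (S' - {a'}))"
    using ecard_insert[of a "S - {a}"] ecard_insert[of a' "S' - {a'}"] by (auto simp: insert_absorb)
  with assms(2) show ?thesis by (simp add: min_enat_Suc_eSuc_iff)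
next
  case False
  with assms have "S - {a} = S" "S' - {a'} = S'" by auto
  with assms(2) show ?thesis by (metis min_enat_SucD)
qed

lemma min_ecard_of_Diff:
  assumes "a \<in> S \<longleftrightarrow> a' \<in> S'"
    and "min (enat q) (ecard (S - {a})) = min (enat q) (ecard (S' - {a'}))"
  shows "min (enat q) (ecard S) = min (enat q) (ecard S')"
proof (cases "a \<in> S")
  case True
  with assms have "ecard S = eSuc (ecard (S - {a}))" "ecard S' = eSuc (ecard (S' - {a'}))"
    using ecard_insert[of a "S - {a}"] ecard_insert[of a' "S' - {a'}"] by (auto simp: insert_absorb)
  with assms(2) show ?thesis
    by (metis min_enat_SucD min_enat_Suc_eSuc_iff)
next
  case False
  with assms have "S - {a} = S" "S' - {a'} = S'" by auto
  with assms(2) show ?thesis by simp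
qed

definition colour :: "'p set \<Rightarrow> 'f set \<Rightarrow> ('u, 'p, 'f) struc \<Rightarrow> 'u \<Rightarrow> 'p set \<times> 'f set" where
  "colour P F M a = ({p \<in> P. preds M p [a]}, {f \<in> F. funs M f [] = a})"

lemma colour_in_Pow: "colour P F M a \<in> Pow P \<times> Pow F"
  by (auto simp: colour_def)

definition free_class :: "'p set \<Rightarrow> 'f set \<Rightarrow> ('u, 'p, 'f) struc \<Rightarrow> nat set \<Rightarrow> (nat \<Rightarrow> 'u)
    \<Rightarrow> 'p set \<times> 'f set \<Rightarrow> 'u set" where
  "free_class P F M V e \<tau> = {a \<in> univ M. colour P F M a = \<tau> \<and> a \<notin> e ` V}"

lemma free_class_insert:
  "x \<notin> V \<Longrightarrow> free_class P F M (insert x V) (e(x := a)) \<tau> = free_class P F M V e \<tau> - {a}"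
  by (auto simp: free_class_def image_iff)

text \<open>For languages with at most unary predicates and only constants as function symbols, this
  lets the duplicator win the \<open>q\<close>-round Ehrenfeucht-Fraisse game from \<open>e|V\<close> and \<open>e'|V\<close>.\<close>
definition ef_equiv :: "'p set \<Rightarrow> 'f set \<Rightarrow> nat \<Rightarrow> nat set \<Rightarrow> ('u, 'p, 'f) struc \<Rightarrow> (nat \<Rightarrow> 'u)
    \<Rightarrow> ('u, 'p, 'f) struc \<Rightarrow> (nat \<Rightarrow> 'u) \<Rightarrow> bool" where
  "ef_equiv P F q V M e M' e' \<longleftrightarrow>
     {p \<in> P. preds M p []} = {p \<in> P. preds M' p []} \<and>
     (\<forall>x\<in>V. colour P F M (e x) = colour P F M' (e' x)) \<and>
     (\<forall>x\<in>V. \<forall>y\<in>V. e x = e y \<longleftrightarrow> e' x = e' y) \<and>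
     (\<forall>\<tau>. min (enat q) (ecard (free_class P F M V e \<tau>))
        = min (enat q) (ecard (free_class P F M' V e' \<tau>)))"

lemma ef_equiv_sym: "ef_equiv P F q V M e M' e' \<Longrightarrow> ef_equiv P F q V M' e' M e"
  unfolding ef_equiv_def by auto

lemma ef_equiv_Diff:
  assumes ef: "ef_equiv P F q V M e M' e'"
    and range: "range e \<subseteq> univ M" "range e' \<subseteq> univ M'"
  shows "ef_equiv P F q (V - {x}) M e M' e'"
proof (cases "x \<in> V")
  case False
  with ef show ?thesis by simp
next
  case True
  define W where "W = V - {x}"
  have V: "V = insert x W" "x \<notin> W" using True by (auto simp: W_def)
  have eq: "e x = e y \<longleftrightarrow> e' x = e' y" if "y \<in> W" for y
    using ef that V unfolding ef_equiv_def by blast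
  have col: "colour P F M (e x) = colour P F M' (e' x)"
    using ef V unfolding ef_equiv_def by blast
  have "min (enat q) (ecard (free_class P F M W e \<tau>)) = min (enat q) (ecard (free_class P F M' W e' \<tau>))"
    for \<tau>
  proof (rule min_ecard_of_Diff)
    show "e x \<in> free_class P F M W e \<tau> \<longleftrightarrow> e' x \<in> free_class P F M' W e' \<tau>"
      using range col eq by (auto simp: free_class_def)
    have "free_class P F M V e \<tau> = free_class P F M W e \<tau> - {e x}"
      "free_class P F M' V e' \<tau> = free_class P F M' W e' \<tau> - {e' x}"
      using free_class_insert[OF V(2), of P F M e "e x"] free_class_insert[OF V(2), of P F M' e' "e' x"]
      by (simp_all add: V(1))
    then show "min (enat q) (ecard (free_class P F M W e \<tau> - {e x}))
        = min (enat q) (ecard (free_class P F M' W e' \<tau> - {e' x}))"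
      using ef unfolding ef_equiv_def by metis
  qed
  with ef show ?thesis unfolding ef_equiv_def W_def by blast
qed

lemma ef_equiv_insert:
  assumes ef: "ef_equiv P F (Suc q) V M e M' e'" and "x \<notin> V"
    and "a \<in> univ M" "a' \<in> univ M'" and col: "colour P F M a = colour P F M' a'"
    and eq: "\<forall>y\<in>V. a = e y \<longleftrightarrow> a' = e' y"
  shows "ef_equiv P F q (insert x V) M (e(x := a)) M' (e'(x := a'))"
  unfolding ef_equiv_def
proof (intro conjI ballI allI)
  show "{p \<in> P. preds M p []} = {p \<in> P. preds M' p []}"
    using ef by (simp add: ef_equiv_def)
  show "colour P F M ((e(x := a)) y) = colour P F M' ((e'(x := a')) y)" if "y \<in> insert x V" for y
    using ef that col by (auto simp: ef_equiv_def)
  show "(e(x := a)) y = (e(x := a)) z \<longleftrightarrow> (e'(x := a')) y = (e'(x := a')) z"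
    if "y \<in> insert x V" "z \<in> insert x V" for y z
    using ef that eq \<open>x \<notin> V\<close> by (auto simp: ef_equiv_def)
  show "min (enat q) (ecard (free_class P F M (insert x V) (e(x := a)) \<tau>))
      = min (enat q) (ecard (free_class P F M' (insert x V) (e'(x := a')) \<tau>))" for \<tau>
    unfolding free_class_insert[OF \<open>x \<notin> V\<close>]
  proof (rule min_ecard_Diff)
    show "a \<in> free_class P F M V e \<tau> \<longleftrightarrow> a' \<in> free_class P F M' V e' \<tau>"
      using assms(3,4) col eq by (auto simp: free_class_def)
    show "min (enat (Suc q)) (ecard (free_class P F M V e \<tau>))
        = min (enat (Suc q)) (ecard (free_class P F M' V e' \<tau>))"
      using ef unfolding ef_equiv_def by blast
  qed
qed

lemma ef_equiv_forth:
  assumes ef: "ef_equiv P F (Suc q) V M e M' e'" and "x \<notin> V"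
    and "a \<in> univ M" and range: "range e' \<subseteq> univ M'"
  shows "\<exists>a'\<in>univ M'. ef_equiv P F q (insert x V) M (e(x := a)) M' (e'(x := a'))"
proof (cases "a \<in> e ` V")
  case True
  then obtain y where "y \<in> V" "a = e y" by blast
  with ef have "colour P F M a = colour P F M' (e' y)" "\<forall>z\<in>V. a = e z \<longleftrightarrow> e' y = e' z"
    by (auto simp: ef_equiv_def)
  moreover have "e' y \<in> univ M'" using range by blast
  ultimately show ?thesis
    using ef_equiv_insert[OF ef \<open>x \<notin> V\<close> \<open>a \<in> univ M\<close>] by blast
next
  case False
  define \<tau> where "\<tau> = colour P F M a"
  have "a \<in> free_class P F M V e \<tau>"
    using False \<open>a \<in> univ M\<close> by (simp add: free_class_def \<tau>_def)
  then have "min (enat (Suc q)) (ecard (free_class P F M V e \<tau>)) \<noteq> 0"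
    by (auto simp: ecard_eq_0_iff enat_0_iff min_def)
  then have "min (enat (Suc q)) (ecard (free_class P F M' V e' \<tau>)) \<noteq> 0"
    using ef unfolding ef_equiv_def by metis
  then have "free_class P F M' V e' \<tau> \<noteq> {}"
    by (auto simp: ecard_def enat_0)
  then obtain a' where a': "a' \<in> univ M'" "colour P F M' a' = \<tau>" "a' \<notin> e' ` V"
    by (auto simp: free_class_def)
  have "\<forall>y\<in>V. a = e y \<longleftrightarrow> a' = e' y"
    using False a'(3) by blast
  with a' show ?thesis
    using ef_equiv_insert[OF ef \<open>x \<notin> V\<close> \<open>a \<in> univ M\<close> a'(1)] by (auto simp: \<tau>_def)
qed

fun qdepth :: "('p, 'f) fm \<Rightarrow> nat" where
  "qdepth (Eq x y) = 0"
| "qdepth (Rel s xs) = 0"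
| "qdepth (Neg \<phi>) = qdepth \<phi>"
| "qdepth (Conj \<phi> \<psi>) = max (qdepth \<phi>) (qdepth \<psi>)"
| "qdepth (Ex x \<phi>) = Suc (qdepth \<phi>)"

lemma sat_Rel_eq_if_ef_equiv:
  assumes small_arity: "\<forall>p\<in>P. parr p < 2" "\<forall>f\<in>F. farr f = 0"
    and wf: "wf_fm P F parr farr (Rel s xs)" and "set xs \<subseteq> V" and ef: "ef_equiv P F q V M e M' e'"
  shows "sat M e (Rel s xs) = sat M' e' (Rel s xs)"
proof -
  have col: "colour P F M (e y) = colour P F M' (e' y)" if "y \<in> set xs" for y
    using ef that \<open>set xs \<subseteq> V\<close> unfolding ef_equiv_def by blast
  show ?thesis
  proof (cases s)
    case (Inl p)
    with wf small_arity(1) have "p \<in> P" "length xs < 2" by auto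
    then consider "xs = []" | y where "xs = [y]"
      by (metis length_0_conv length_Suc_conv less_2_cases One_nat_def)
    then show ?thesis
    proof cases
      case 1
      have "{p \<in> P. preds M p []} = {p \<in> P. preds M' p []}"
        using ef by (simp add: ef_equiv_def)
      with \<open>p \<in> P\<close> have "preds M p [] \<longleftrightarrow> preds M' p []" by blast
      with 1 Inl show ?thesis by simp
    next
      case 2
      with col have "colour P F M (e y) = colour P F M' (e' y)" by simp
      with \<open>p \<in> P\<close> have "preds M p [e y] \<longleftrightarrow> preds M' p [e' y]"
        unfolding colour_def by blast
      with 2 Inl show ?thesis by simp
    qed
  next
    case (Inr f)
    with wf small_arity(2) obtain y where "f \<in> F" "xs = [y]"
      by (auto simp: length_Suc_conv)
    with col have "colour P F M (e y) = colour P F M' (e' y)" by simp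
    with \<open>f \<in> F\<close> have "funs M f [] = e y \<longleftrightarrow> funs M' f [] = e' y"
      unfolding colour_def by blast
    with \<open>xs = [y]\<close> Inr show ?thesis by simp
  qed
qed

lemma sat_Ex_if_ef_equiv:
  assumes ef: "ef_equiv P F (Suc q) V M e M' e'"
    and range: "range e \<subseteq> univ M" "range e' \<subseteq> univ M'"
    and step: "\<And>a a'. a \<in> univ M \<Longrightarrow> a' \<in> univ M'
        \<Longrightarrow> ef_equiv P F q (insert x (V - {x})) M (e(x := a)) M' (e'(x := a'))
        \<Longrightarrow> sat M (e(x := a)) \<phi> \<Longrightarrow> sat M' (e'(x := a')) \<phi>"
    and "sat M e (Ex x \<phi>)"
  shows "sat M' e' (Ex x \<phi>)"
proof -
  obtain a where a: "a \<in> univ M" "sat M (e(x := a)) \<phi>"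
    using \<open>sat M e (Ex x \<phi>)\<close> by auto
  have "ef_equiv P F (Suc q) (V - {x}) M e M' e'"
    using ef_equiv_Diff[OF ef range] .
  moreover have "x \<notin> V - {x}" by simp
  ultimately obtain a' where "a' \<in> univ M'"
      "ef_equiv P F q (insert x (V - {x})) M (e(x := a)) M' (e'(x := a'))"
    using ef_equiv_forth[OF _ _ a(1) range(2)] by blast
  with a step show ?thesis by auto
qed

lemma sat_eq_if_ef_equiv:
  fixes M M' :: "('u, 'p, 'f) struc"
  assumes small_arity: "\<forall>p\<in>P. parr p < 2" "\<forall>f\<in>F. farr f = 0"
    and "wf_fm P F parr farr \<phi>" "fv \<phi> \<subseteq> V" "qdepth \<phi> \<le> q" "ef_equiv P F q V M e M' e'"
    and "range e \<subseteq> univ M" "range e' \<subseteq> univ M'"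
  shows "sat M e \<phi> = sat M' e' \<phi>"
  using assms(3-)
proof (induction \<phi> arbitrary: q V M e M' e')
  case (Eq x y)
  then show ?case by (simp add: ef_equiv_def)
next
  case (Rel s xs)
  then show ?case by (intro sat_Rel_eq_if_ef_equiv[OF small_arity]) simp_all
next
  case (Neg \<phi>)
  then show ?case by simp
next
  case (Conj \<phi>\<^sub>1 \<phi>\<^sub>2)
  have "sat M e \<phi>\<^sub>1 = sat M' e' \<phi>\<^sub>1" "sat M e \<phi>\<^sub>2 = sat M' e' \<phi>\<^sub>2"
    by (rule Conj.IH; use Conj.prems in auto)+
  then show ?case by simp
next
  case (Ex x \<phi>)
  obtain q' where q': "q = Suc q'" "qdepth \<phi> \<le> q'"
    using Ex.prems(3) by (cases q) auto
  have IH: "sat M\<^sub>2 e\<^sub>2 \<phi> = sat M\<^sub>2' e\<^sub>2' \<phi>"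
    if "ef_equiv P F q' (insert x (V - {x})) M\<^sub>2 e\<^sub>2 M\<^sub>2' e\<^sub>2'"
      "range e\<^sub>2 \<subseteq> univ M\<^sub>2" "range e\<^sub>2' \<subseteq> univ M\<^sub>2'"
    for M\<^sub>2 M\<^sub>2' :: "('u, 'p, 'f) struc" and e\<^sub>2 e\<^sub>2'
    using Ex.prems(1,2) q'(2) that by (intro Ex.IH) auto
  have ef: "ef_equiv P F (Suc q') V M e M' e'" "ef_equiv P F (Suc q') V M' e' M e"
    using Ex.prems(4) q'(1) ef_equiv_sym by blast+
  have "sat M' e' (Ex x \<phi>)" if "sat M e (Ex x \<phi>)"
    by (rule sat_Ex_if_ef_equiv[OF ef(1) Ex.prems(5,6) _ that])
      (use IH Ex.prems(5,6) in \<open>auto simp: image_subset_iff\<close>)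
  moreover have "sat M e (Ex x \<phi>)" if "sat M' e' (Ex x \<phi>)"
    by (rule sat_Ex_if_ef_equiv[OF ef(2) Ex.prems(6,5) _ that])
      (use IH Ex.prems(5,6) in \<open>auto simp: image_subset_iff\<close>)
  ultimately show ?case by blast
qed

definition invariant :: "'p set \<Rightarrow> 'f set \<Rightarrow> ('u, 'p, 'f) struc \<Rightarrow> 'p set \<times> ('p set \<times> 'f set \<Rightarrow> enat)" where
  "invariant P F M = ({p \<in> P. preds M p []}, \<lambda>\<tau>. ecard {a \<in> univ M. colour P F M a = \<tau>})"

definition trunc :: "nat \<Rightarrow> 'z \<times> ('t \<Rightarrow> enat) \<Rightarrow> 'z \<times> ('t \<Rightarrow> enat)" where
  "trunc q v = (fst v, \<lambda>\<tau>. min (enat q) (snd v \<tau>))"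

lemma models_eq_if_trunc_invariant_eq:
  fixes M M' :: "('u, 'p, 'f) struc"
  assumes small_arity: "\<forall>p\<in>P. parr p < 2" "\<forall>f\<in>F. farr f = 0"
    and "sentence P F parr farr \<phi>" "qdepth \<phi> \<le> q"
    and inv: "trunc q (invariant P F M) = trunc q (invariant P F M')"
    and "univ M \<noteq> {}" "univ M' \<noteq> {}"
  shows "models M \<phi> \<longleftrightarrow> models M' \<phi>"
proof -
  obtain a a' where a: "a \<in> univ M" "a' \<in> univ M'"
    using assms(6,7) by blast
  have "ef_equiv P F q {} M (\<lambda>_. a) M' (\<lambda>_. a')"
    using inv unfolding ef_equiv_def trunc_def invariant_def free_class_def
    by (simp add: fun_eq_iff)
  then have "sat M (\<lambda>_. a) \<phi> = sat M' (\<lambda>_. a') \<phi>"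
    using assms(3,4) a by (intro sat_eq_if_ef_equiv[OF small_arity]) (auto simp: sentence_def)
  moreover have "fv \<phi> = {}" using assms(3) by (simp add: sentence_def)
  ultimately show ?thesis
    using a models_iff_sat[of \<phi> "\<lambda>_. a" M] models_iff_sat[of \<phi> "\<lambda>_. a'" M'] by auto
qed

text \<open>Closure in the product topology on \<open>'z \<times> ('t \<Rightarrow> \<nat> \<union> {\<infinity>})\<close>, with \<open>'z\<close> discrete and
  \<open>\<nat> \<union> {\<infinity>}\<close> the one-point compactification of \<open>\<nat>\<close>, when \<open>'t\<close> is finite.\<close>
definition in_closure :: "('z \<times> ('t \<Rightarrow> enat)) set \<Rightarrow> 'z \<times> ('t \<Rightarrow> enat) \<Rightarrow> bool" where
  "in_closure B x \<longleftrightarrow> (\<forall>q. \<exists>b\<in>B. trunc q b = trunc q x)"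

definition infinities :: "'z \<times> ('t \<Rightarrow> enat) \<Rightarrow> 't set" where
  "infinities x = {\<tau>. snd x \<tau> = \<infinity>}"

definition inv_space :: "'z set \<Rightarrow> 't set \<Rightarrow> ('z \<times> ('t \<Rightarrow> enat)) set" where
  "inv_space Z I = {x. fst x \<in> Z \<and> (\<forall>\<tau>. \<tau> \<notin> I \<longrightarrow> snd x \<tau> = 0)}"

lemma in_closure_self: "x \<in> B \<Longrightarrow> in_closure B x"
  by (auto simp: in_closure_def)

lemma in_closure_trans: "in_closure B x \<Longrightarrow> (\<And>b. b \<in> B \<Longrightarrow> in_closure C b) \<Longrightarrow> in_closure C x"
  unfolding in_closure_def by metis

lemma in_closure_mono: "in_closure B x \<Longrightarrow> B \<subseteq> C \<Longrightarrow> in_closure C x"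
  unfolding in_closure_def by blast

lemma infinities_subset: "x \<in> inv_space Z I \<Longrightarrow> infinities x \<subseteq> I"
  by (auto simp: inv_space_def infinities_def)

lemma card_infinities_le: "finite I \<Longrightarrow> x \<in> inv_space Z I \<Longrightarrow> card (infinities x) \<le> card I"
  by (simp add: card_mono infinities_subset)

lemma infinite_subset_const_or_finite_fibres:
  fixes f :: "'b \<Rightarrow> 't \<Rightarrow> 'v"
  assumes "finite J" "infinite B"
  shows "\<exists>B' \<subseteq> B. infinite B' \<and> (\<exists>L \<subseteq> J. (\<forall>\<tau> \<in> J - L. \<exists>v. \<forall>b \<in> B'. f b \<tau> = v)
           \<and> (\<forall>\<tau> \<in> L. \<forall>v. finite {b \<in> B'. f b \<tau> = v}))"
  using assms(1)
proof (induction J rule: finite_induct)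
  case empty
  show ?case using assms(2) by blast
next
  case (insert \<tau> J)
  then obtain B' L where B': "B' \<subseteq> B" "infinite B'" "L \<subseteq> J"
      "\<forall>\<sigma> \<in> J - L. \<exists>v. \<forall>b \<in> B'. f b \<sigma> = v" "\<forall>\<sigma> \<in> L. \<forall>v. finite {b \<in> B'. f b \<sigma> = v}"
    by blast
  show ?case
  proof (cases "\<exists>v. infinite {b \<in> B'. f b \<tau> = v}")
    case True
    then obtain v where v: "infinite {b \<in> B'. f b \<tau> = v}" by blast
    let ?B = "{b \<in> B'. f b \<tau> = v}"
    have "\<forall>\<sigma> \<in> insert \<tau> J - L. \<exists>w. \<forall>b \<in> ?B. f b \<sigma> = w"
      using B'(4) by fastforce
    moreover have "\<forall>\<sigma> \<in> L. \<forall>w. finite {b \<in> ?B. f b \<sigma> = w}"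
    proof (intro ballI allI)
      fix \<sigma> w
      assume "\<sigma> \<in> L"
      with B'(5) have "finite {b \<in> B'. f b \<sigma> = w}" by blast
      then show "finite {b \<in> ?B. f b \<sigma> = w}" by (rule rev_finite_subset) blast
    qed
    ultimately show ?thesis
      using B'(1,3) v by (intro exI[of _ ?B] conjI exI[of _ L]) auto
  next
    case False
    then have "\<forall>\<sigma> \<in> insert \<tau> L. \<forall>w. finite {b \<in> B'. f b \<sigma> = w}"
      using B'(5) by auto
    moreover have "\<forall>\<sigma> \<in> insert \<tau> J - insert \<tau> L. \<exists>w. \<forall>b \<in> B'. f b \<sigma> = w"
      using B'(4) by auto
    ultimately show ?thesis
      using B'(1-3) by (intro exI[of _ B'] conjI exI[of _ "insert \<tau> L"]) auto
  qed
qed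

lemma ex_point_with_large_finite_coords:
  fixes g :: "'b \<Rightarrow> 't \<Rightarrow> enat"
  assumes "infinite B" "finite L" "\<And>\<tau> v. \<tau> \<in> L \<Longrightarrow> finite {b \<in> B. g b \<tau> = v}"
  shows "\<exists>b \<in> B. \<forall>\<tau> \<in> L. \<exists>n. g b \<tau> = enat n \<and> q \<le> n"
proof -
  define Bad where "Bad = (\<Union>\<tau> \<in> L. \<Union>v \<in> insert \<infinity> (enat ` {..<q}). {b \<in> B. g b \<tau> = v})"
  have "finite Bad"
    unfolding Bad_def using assms(2,3) by blast
  then obtain b where "b \<in> B" "b \<notin> Bad"
    using assms(1) by (meson finite_subset subsetI)
  moreover have "\<exists>n. g b \<tau> = enat n \<and> q \<le> n" if "\<tau> \<in> L" for \<tau>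
  proof (cases "g b \<tau>")
    case (enat n)
    with \<open>b \<in> B\<close> \<open>b \<notin> Bad\<close> that have "\<not> n < q" by (auto simp: Bad_def)
    with enat show ?thesis by simp
  next
    case infinity
    with \<open>b \<in> B\<close> \<open>b \<notin> Bad\<close> that show ?thesis by (auto simp: Bad_def)
  qed
  ultimately show ?thesis by blast
qed

lemma infinite_subset_agreeing_outside:
  fixes B :: "('z \<times> ('t \<Rightarrow> enat)) set"
  assumes "finite Z" "finite I" "infinite B" "B \<subseteq> inv_space Z I"
  obtains B' L x where "B' \<subseteq> B" "infinite B'" "L \<subseteq> I" "x \<in> inv_space Z I"
    "\<And>\<tau>. \<tau> \<in> L \<Longrightarrow> snd x \<tau> = \<infinity>"
    "\<And>b. b \<in> B' \<Longrightarrow> fst b = fst x" "\<And>b \<tau>. b \<in> B' \<Longrightarrow> \<tau> \<notin> L \<Longrightarrow> snd b \<tau> = snd x \<tau>"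
    "\<And>\<tau> v. \<tau> \<in> L \<Longrightarrow> finite {b \<in> B'. snd b \<tau> = v}"
proof -
  have "fst ` B \<subseteq> Z" using assms(4) by (auto simp: inv_space_def)
  moreover from this have "finite (fst ` B)" using assms(1) by (rule finite_subset)
  then obtain z where "z \<in> fst ` B" "infinite (fst -` {z} \<inter> B)"
    using assms(3) by (rule inf_img_fin_domE')
  ultimately have z: "z \<in> Z" "infinite (fst -` {z} \<inter> B)" by blast+
  obtain B' L where B': "B' \<subseteq> fst -` {z} \<inter> B" "infinite B'" "L \<subseteq> I"
      "\<forall>\<tau> \<in> I - L. \<exists>v. \<forall>b \<in> B'. snd b \<tau> = v"
    and fibres: "\<forall>\<tau> \<in> L. \<forall>v. finite {b \<in> B'. snd b \<tau> = v}"
    using infinite_subset_const_or_finite_fibres[OF assms(2) z(2), of snd] by (elim exE conjE) blast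
  obtain c where c: "\<And>\<tau> b. \<tau> \<in> I - L \<Longrightarrow> b \<in> B' \<Longrightarrow> snd b \<tau> = c \<tau>"
    using B'(4) by metis
  define x where "x = (z, \<lambda>\<tau>. if \<tau> \<in> L then \<infinity> else if \<tau> \<in> I then c \<tau> else 0)"
  show ?thesis
  proof (rule that)
    show "B' \<subseteq> B" using B'(1) by blast
    show "x \<in> inv_space Z I"
      using z(1) B'(3) by (auto simp: x_def inv_space_def)
    show "fst b = fst x" "\<tau> \<notin> L \<Longrightarrow> snd b \<tau> = snd x \<tau>" if "b \<in> B'" for b \<tau>
      using that B'(1) assms(4) c by (auto simp: x_def inv_space_def)
    show "snd x \<tau> = \<infinity>" if "\<tau> \<in> L" for \<tau>
      using that by (simp add: x_def)
  qed (use B'(2,3) fibres in auto)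
qed

lemma trunc_eq_if_large_on:
  assumes "fst b = fst x" "\<And>\<tau>. \<tau> \<notin> L \<Longrightarrow> snd b \<tau> = snd x \<tau>"
    and "\<And>\<tau>. \<tau> \<in> L \<Longrightarrow> snd x \<tau> = \<infinity>" "\<forall>\<tau> \<in> L. \<exists>n. snd b \<tau> = enat n \<and> q \<le> n"
  shows "trunc q b = trunc q x"
proof -
  have "min (enat q) (snd b \<tau>) = min (enat q) (snd x \<tau>)" for \<tau>
  proof (cases "\<tau> \<in> L")
    case True
    with assms(4) obtain n where "snd b \<tau> = enat n" "q \<le> n" by blast
    with True assms(3) show ?thesis by (simp add: min_def)
  next
    case False
    with assms(2) show ?thesis by simp
  qed
  with assms(1) show ?thesis
    by (simp add: trunc_def prod_eq_iff fun_eq_iff)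
qed

lemma card_infinities_less:
  assumes "x \<in> inv_space Z I" "finite I" "L \<noteq> {}"
    and "\<And>\<tau>. \<tau> \<in> L \<Longrightarrow> snd x \<tau> = \<infinity>" "\<And>\<tau>. \<tau> \<in> L \<Longrightarrow> snd b \<tau> \<noteq> \<infinity>"
    and "\<And>\<tau>. \<tau> \<notin> L \<Longrightarrow> snd b \<tau> = snd x \<tau>"
  shows "card (infinities b) < card (infinities x)"
proof -
  have "infinities b \<subseteq> infinities x"
  proof
    fix \<tau>
    assume "\<tau> \<in> infinities b"
    then have "snd b \<tau> = \<infinity>" by (simp add: infinities_def)
    with assms(5) have "\<tau> \<notin> L" by blast
    with assms(6) \<open>snd b \<tau> = \<infinity>\<close> show "\<tau> \<in> infinities x" by (simp add: infinities_def)
  qed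
  moreover obtain \<tau> where "\<tau> \<in> L"
    using assms(3) by blast
  with assms(4,5) have "\<tau> \<in> infinities x - infinities b"
    by (simp add: infinities_def)
  ultimately have "infinities b \<subset> infinities x" by blast
  moreover have "finite (infinities x)"
    using infinities_subset[OF assms(1)] assms(2) finite_subset by blast
  ultimately show ?thesis
    by (simp add: psubset_card_mono)
qed

lemma limit_point_with_more_infinities:
  fixes B :: "('z \<times> ('t \<Rightarrow> enat)) set"
  assumes "finite Z" "finite I" "infinite B" "B \<subseteq> inv_space Z I"
    and more: "\<And>b. b \<in> B \<Longrightarrow> m \<le> card (infinities b)"
    and closure: "\<And>b. b \<in> B \<Longrightarrow> in_closure C b"
  shows "\<exists>x \<in> inv_space Z I. Suc m \<le> card (infinities x) \<and> in_closure C x"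
proof -
  obtain B' L x where B': "B' \<subseteq> B" "infinite B'" "L \<subseteq> I" and x: "x \<in> inv_space Z I"
    and L: "\<And>\<tau>. \<tau> \<in> L \<Longrightarrow> snd x \<tau> = \<infinity>"
    and agree: "\<And>b. b \<in> B' \<Longrightarrow> fst b = fst x" "\<And>b \<tau>. b \<in> B' \<Longrightarrow> \<tau> \<notin> L \<Longrightarrow> snd b \<tau> = snd x \<tau>"
    and fibres: "\<And>\<tau> v. \<tau> \<in> L \<Longrightarrow> finite {b \<in> B'. snd b \<tau> = v}"
    using infinite_subset_agreeing_outside[OF assms(1-4)] by blast
  have "L \<noteq> {}"
  proof
    assume "L = {}"
    with agree have "B' \<subseteq> {x}" by (simp add: subset_iff prod_eq_iff fun_eq_iff)
    with B'(2) show False using finite_subset by blast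
  qed
  have "finite L"
    using B'(3) assms(2) finite_subset by blast
  have large: "\<exists>b \<in> B'. \<forall>\<tau> \<in> L. \<exists>n. snd b \<tau> = enat n \<and> q \<le> n" for q
    by (rule ex_point_with_large_finite_coords[where g = snd, OF B'(2) \<open>finite L\<close>]) (rule fibres)
  have "in_closure B x"
    unfolding in_closure_def
  proof
    fix q
    obtain b where b: "b \<in> B'" "\<forall>\<tau> \<in> L. \<exists>n. snd b \<tau> = enat n \<and> q \<le> n"
      using large by blast
    have "trunc q b = trunc q x"
      using agree(1)[OF b(1)] agree(2)[OF b(1)] L b(2) by (rule trunc_eq_if_large_on)
    with b(1) B'(1) show "\<exists>b \<in> B. trunc q b = trunc q x" by blast
  qed
  then have "in_closure C x"
    using closure by (rule in_closure_trans)
  obtain b where b: "b \<in> B'" "\<forall>\<tau> \<in> L. snd b \<tau> \<noteq> \<infinity>"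
    using large[of 0] by fastforce
  have "card (infinities b) < card (infinities x)"
    using x assms(2) \<open>L \<noteq> {}\<close> L b(2)[rule_format] agree(2)[OF b(1)]
    by (rule card_infinities_less)
  moreover have "m \<le> card (infinities b)"
    using more b(1) B'(1) by blast
  ultimately have "Suc m \<le> card (infinities x)"
    by linarith
  with x \<open>in_closure C x\<close> show ?thesis by blast
qed

lemma finite_image_if_factors:
  assumes "finite (f ` X)" "\<And>x y. x \<in> X \<Longrightarrow> y \<in> X \<Longrightarrow> f x = f y \<Longrightarrow> g x = g y"
  shows "finite (g ` X)"
proof -
  have "g ` X \<subseteq> (\<lambda>v. g (SOME x. x \<in> X \<and> f x = v)) ` f ` X"
  proof
    fix y
    assume "y \<in> g ` X"
    then obtain x where x: "x \<in> X" "y = g x" by blast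
    let ?x = "SOME x'. x' \<in> X \<and> f x' = f x"
    have "?x \<in> X \<and> f ?x = f x" by (rule someI[of _ x]) (use x in simp)
    with assms(2) x have "y = g ?x" by metis
    with x show "y \<in> (\<lambda>v. g (SOME x. x \<in> X \<and> f x = v)) ` f ` X" by blast
  qed
  with assms(1) show ?thesis by (rule finite_surj)
qed

lemma invariant_in_inv_space: "invariant P F M \<in> inv_space (Pow P) (Pow P \<times> Pow F)"
proof -
  have "snd (invariant P F M) \<tau> = 0" if "\<tau> \<notin> Pow P \<times> Pow F" for \<tau>
  proof -
    have "{a \<in> univ M. colour P F M a = \<tau>} = {}"
      using that by (auto simp: colour_def)
    then show ?thesis by (simp add: invariant_def ecard_eq_0_iff)
  qed
  then show ?thesis by (simp add: inv_space_def invariant_def)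
qed

lemma infinities_invariant_nonempty:
  assumes "finite P" "finite F" "infinite (univ M)"
  shows "infinities (invariant P F M) \<noteq> {}"
proof
  assume none: "infinities (invariant P F M) = {}"
  have "finite {a \<in> univ M. colour P F M a = \<tau>}" for \<tau>
  proof (rule ccontr)
    assume "infinite {a \<in> univ M. colour P F M a = \<tau>}"
    then have "\<tau> \<in> infinities (invariant P F M)"
      by (simp add: infinities_def invariant_def ecard_def)
    with none show False by blast
  qed
  then have "finite (\<Union>\<tau> \<in> Pow P \<times> Pow F. {a \<in> univ M. colour P F M a = \<tau>})"
    using assms(1,2) by simp
  moreover have "univ M \<subseteq> (\<Union>\<tau> \<in> Pow P \<times> Pow F. {a \<in> univ M. colour P F M a = \<tau>})"
    by (auto intro: UN_I[OF colour_in_Pow])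
  ultimately show False
    using assms(3) finite_subset by blast
qed

lemma Th_eq_if_invariant_eq:
  fixes M M' :: "('u, 'p, 'f) struc"
  assumes small_arity: "\<forall>p\<in>P. parr p < 2" "\<forall>f\<in>F. farr f = 0"
    and "is_struc F farr M" "is_struc F farr M'" "invariant P F M = invariant P F M'"
  shows "Th P F parr farr M = Th P F parr farr M'"
  using assms models_eq_if_trunc_invariant_eq[OF small_arity, of _ "qdepth _" M M']
  by (auto simp: Th_def is_struc_def)

definition invariants :: "'p set \<Rightarrow> 'f set \<Rightarrow> ('p \<Rightarrow> nat) \<Rightarrow> ('f \<Rightarrow> nat) \<Rightarrow> ('p, 'f) fm set set
    \<Rightarrow> ('p set \<times> ('p set \<times> 'f set \<Rightarrow> enat)) set" where
  "invariants P F parr farr \<T> = {invariant P F M | M :: (('p, 'f) U, 'p, 'f) struc.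
      is_struc F farr M \<and> infinite (univ M) \<and> Th P F parr farr M \<in> \<T>}"

lemma infinite_invariants:
  fixes P :: "'p set" and F :: "'f set"
  assumes small_arity: "\<forall>p\<in>P. parr p < 2" "\<forall>f\<in>F. farr f = 0"
    and "\<T> \<subseteq> T_inf P F parr farr" "infinite \<T>"
  shows "infinite (invariants P F parr farr \<T>)"
proof
  define X where "X = {M :: (('p, 'f) U, 'p, 'f) struc.
      is_struc F farr M \<and> infinite (univ M) \<and> Th P F parr farr M \<in> \<T>}"
  assume "finite (invariants P F parr farr \<T>)"
  moreover have "invariants P F parr farr \<T> = invariant P F ` X"
    by (auto simp: invariants_def X_def)
  ultimately have "finite (invariant P F ` X)" by simp
  then have "finite (Th P F parr farr ` X)"
    by (rule finite_image_if_factors) (simp add: X_def Th_eq_if_invariant_eq[OF small_arity])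
  moreover have "\<T> \<subseteq> Th P F parr farr ` X"
    using assms(3) by (auto simp: T_inf_def X_def)
  ultimately show False
    using assms(4) finite_subset by blast
qed

lemma nat_is_zero_iff: "is_zero (n::nat) \<longleftrightarrow> n = 0"
  unfolding is_zero_def by (metis le0 le_0_eq)

lemma nat_is_succ_of_iff: "is_succ_of (m::nat) n \<longleftrightarrow> n = Suc m"
  unfolding is_succ_of_def by (metis Suc_leI le_antisym lessI not_less_eq_eq)

lemma RS_ge_Suc_0_imp_infinite:
  assumes "RS_ge P F parr farr \<T> (Suc 0)"
  shows "infinite \<T>"
  using assms
proof cases
  case limit
  then show ?thesis using nat_is_succ_of_iff[of 0 "Suc 0"] by blast
qed (auto simp: nat_is_zero_iff nat_is_succ_of_iff)

lemma RS_ge_Suc_SucE: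
  assumes "RS_ge P F parr farr \<T> (Suc (Suc k))"
  obtains \<phi> :: "nat \<Rightarrow> ('p, 'f) fm" where "\<And>j. sentence P F parr farr (\<phi> j)"
    "\<And>i j. i \<noteq> j \<Longrightarrow> inconsistent P F parr farr (\<phi> i) (\<phi> j)"
    "\<And>j. RS_ge P F parr farr (restrict_fam \<T> (\<phi> j)) (Suc k)"
  using assms
proof cases
  case (succ \<beta> \<phi>)
  then have "\<beta> = Suc k" by (simp add: nat_is_succ_of_iff)
  with succ that show ?thesis by blast
next
  case limit
  then show ?thesis using nat_is_succ_of_iff[of "Suc k" "Suc (Suc k)"] by blast
qed (auto simp: nat_is_zero_iff nat_is_succ_of_iff)

lemma restrict_fam_subset: "restrict_fam \<T> \<phi> \<subseteq> \<T>"
  by (auto simp: restrict_fam_def)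

lemma invariants_mono: "\<T> \<subseteq> \<T>' \<Longrightarrow> invariants P F parr farr \<T> \<subseteq> invariants P F parr farr \<T>'"
  unfolding invariants_def by blast

lemma limit_invariant_of_infinite_family:
  fixes P :: "'p set" and F :: "'f set"
  assumes fin: "finite P" "finite F"
    and small_arity: "\<forall>p\<in>P. parr p < 2" "\<forall>f\<in>F. farr f = 0"
    and "\<T> \<subseteq> T_inf P F parr farr" "infinite \<T>"
  shows "\<exists>x \<in> inv_space (Pow P) (Pow P \<times> Pow F).
           2 \<le> card (infinities x) \<and> in_closure (invariants P F parr farr \<T>) x"
proof -
  have "card (infinities b) \<ge> 1" if "b \<in> invariants P F parr farr \<T>" for b
  proof -
    from that obtain M :: "(('p, 'f) U, 'p, 'f) struc" where
      "b = invariant P F M" "infinite (univ M)"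
      by (auto simp: invariants_def)
    moreover have "finite (infinities b)"
      using \<open>b = invariant P F M\<close> invariant_in_inv_space infinities_subset fin
      by (metis finite_Pow_iff finite_SigmaI finite_subset)
    ultimately show ?thesis
      using infinities_invariant_nonempty[OF fin] by (simp add: Suc_le_eq card_gt_0_iff)
  qed
  moreover have "invariants P F parr farr \<T> \<subseteq> inv_space (Pow P) (Pow P \<times> Pow F)"
    using invariant_in_inv_space by (auto simp: invariants_def)
  ultimately have "\<exists>x \<in> inv_space (Pow P) (Pow P \<times> Pow F).
      Suc 1 \<le> card (infinities x) \<and> in_closure (invariants P F parr farr \<T>) x"
    using fin infinite_invariants[OF small_arity assms(5,6)]
    by (intro limit_point_with_more_infinities) (auto intro: in_closure_self)
  then show ?thesis by (simp add: numeral_2_eq_2)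
qed

lemma inconsistent_no_common_limit_invariant:
  fixes P :: "'p set" and F :: "'f set"
  assumes small_arity: "\<forall>p\<in>P. parr p < 2" "\<forall>f\<in>F. farr f = 0"
    and "sentence P F parr farr \<phi>" "inconsistent P F parr farr \<phi> \<psi>"
    and "in_closure (invariants P F parr farr (restrict_fam \<T> \<phi>)) x"
    and "in_closure (invariants P F parr farr (restrict_fam \<T> \<psi>)) x"
  shows False
proof -
  let ?q = "qdepth \<phi>"
  have approx: "\<exists>M :: (('p, 'f) U, 'p, 'f) struc. is_struc F farr M \<and> models M \<chi>
      \<and> trunc ?q (invariant P F M) = trunc ?q x"
    if closure: "in_closure (invariants P F parr farr (restrict_fam \<T> \<chi>)) x" for \<chi>
  proof -
    obtain v where "v \<in> invariants P F parr farr (restrict_fam \<T> \<chi>)" "trunc ?q v = trunc ?q x"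
      using closure unfolding in_closure_def by blast
    then show ?thesis
      by (auto simp: invariants_def restrict_fam_def Th_def)
  qed
  obtain M :: "(('p, 'f) U, 'p, 'f) struc" where M: "is_struc F farr M" "models M \<phi>"
      "trunc ?q (invariant P F M) = trunc ?q x"
    using approx[OF assms(5)] by blast
  obtain M' :: "(('p, 'f) U, 'p, 'f) struc" where M': "is_struc F farr M'" "models M' \<psi>"
      "trunc ?q (invariant P F M') = trunc ?q x"
    using approx[OF assms(6)] by blast
  from M(3) M'(3) have "trunc ?q (invariant P F M) = trunc ?q (invariant P F M')"
    by simp
  with M(1,2) M'(1) have "models M' \<phi>"
    using models_eq_if_trunc_invariant_eq[OF small_arity assms(3) order_refl, of M M']
    by (simp add: is_struc_def)
  with M'(1,2) assms(4) show False
    unfolding inconsistent_def by blast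
qed

lemma RS_ge_Suc_imp_limit_invariant:
  fixes P :: "'p set" and F :: "'f set"
  assumes fin: "finite P" "finite F"
    and small_arity: "\<forall>p\<in>P. parr p < 2" "\<forall>f\<in>F. farr f = 0"
    and "\<T> \<subseteq> T_inf P F parr farr" "RS_ge P F parr farr \<T> (Suc k)"
  shows "\<exists>x \<in> inv_space (Pow P) (Pow P \<times> Pow F).
           k + 2 \<le> card (infinities x) \<and> in_closure (invariants P F parr farr \<T>) x"
  using assms(5,6)
proof (induction k arbitrary: \<T>)
  case 0
  then show ?case
    using limit_invariant_of_infinite_family[OF fin small_arity 0(1) RS_ge_Suc_0_imp_infinite[OF 0(2)]]
    by (simp add: numeral_2_eq_2)
next
  case (Suc k)
  let ?S = "inv_space (Pow P) (Pow P \<times> Pow F)"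
  obtain \<phi> :: "nat \<Rightarrow> ('p, 'f) fm" where
    \<phi>: "\<And>j. sentence P F parr farr (\<phi> j)"
      "\<And>i j. i \<noteq> j \<Longrightarrow> inconsistent P F parr farr (\<phi> i) (\<phi> j)"
      "\<And>j. RS_ge P F parr farr (restrict_fam \<T> (\<phi> j)) (Suc k)"
    using RS_ge_Suc_SucE[OF Suc.prems(2)] by blast
  have "\<exists>x \<in> ?S. k + 2 \<le> card (infinities x)
      \<and> in_closure (invariants P F parr farr (restrict_fam \<T> (\<phi> j))) x" for j
    using Suc.IH[OF order_trans[OF restrict_fam_subset Suc.prems(1)] \<phi>(3)] .
  then obtain xs where xs: "\<And>j. xs j \<in> ?S" "\<And>j. k + 2 \<le> card (infinities (xs j))"
      "\<And>j. in_closure (invariants P F parr farr (restrict_fam \<T> (\<phi> j))) (xs j)"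
    by metis
  have "inj xs"
    using inconsistent_no_common_limit_invariant[OF small_arity \<phi>(1) \<phi>(2) xs(3)] xs(3)
    by (metis injI)
  then have "infinite (range xs)"
    using range_inj_infinite by blast
  moreover have "in_closure (invariants P F parr farr \<T>) (xs j)" for j
    using xs(3) invariants_mono[OF restrict_fam_subset] by (rule in_closure_mono)
  ultimately have "\<exists>x \<in> ?S. Suc (k + 2) \<le> card (infinities x)
      \<and> in_closure (invariants P F parr farr \<T>) x"
    using fin xs(1,2) by (intro limit_point_with_more_infinities) auto
  then show ?case by simp
qed

lemma RS_T_inf_finite:
  fixes P :: "'p set" and F :: "'f set"
  assumes fin: "finite P" "finite F"
    and small_arity: "\<forall>p\<in>P. parr p < 2" "\<forall>f\<in>F. farr f = 0"
  shows "\<exists>n::nat. RS_ge P F parr farr (T_inf P F parr farr) n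
           \<and> \<not> RS_ge P F parr farr (T_inf P F parr farr) (Suc n)"
proof -
  let ?RS = "RS_ge P F parr farr (T_inf P F parr farr) :: nat \<Rightarrow> bool"
  let ?I = "Pow P \<times> Pow F"
  have "\<not> ?RS (Suc (card ?I))"
  proof
    assume "?RS (Suc (card ?I))"
    then obtain x where "x \<in> inv_space (Pow P) ?I" "card ?I + 2 \<le> card (infinities x)"
      using RS_ge_Suc_imp_limit_invariant[OF fin small_arity order_refl] by blast
    moreover have "finite ?I" using fin by simp
    ultimately show False using card_infinities_le[of ?I x "Pow P"] by linarith
  qed
  moreover have "?RS 0"
    using T_inf_nonempty by (intro RS_ge.zero) (simp_all add: nat_is_zero_iff)
  ultimately obtain n where "?RS n" "\<not> ?RS (Suc n)"
    using ex_least_nat_less[of "\<lambda>n. \<not> ?RS n"] by blast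
  then show ?thesis by blast
qed

theorem theorem3p2:
  fixes P :: "'p set" and F :: "'f set" and parr :: "'p \<Rightarrow> nat" and farr :: "'f \<Rightarrow> nat"
  shows "if finite P \<and> finite F \<and> (\<forall>p\<in>P. parr p < 2) \<and> (\<forall>f\<in>F. farr f = 0)
         then (\<exists>n::nat. RS_ge P F parr farr (T_inf P F parr farr) n
                      \<and> \<not> RS_ge P F parr farr (T_inf P F parr farr) (Suc n))
         else (\<forall>\<alpha>::'o::wellorder. RS_ge P F parr farr (T_inf P F parr farr) \<alpha>)"
proof (cases "finite P \<and> finite F \<and> (\<forall>p\<in>P. parr p < 2) \<and> (\<forall>f\<in>F. farr f = 0)")
  case True
  then show ?thesis
    unfolding if_P[OF True] by (intro RS_T_inf_finite) simp_all
next
  case False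
  then have "infinite P \<or> infinite F \<or> (\<exists>p\<in>P. 2 \<le> parr p) \<or> (\<exists>f\<in>F. 1 \<le> farr f)"
    by (auto simp: not_less Suc_le_eq)
  then consider "infinite P" | "infinite F" | p where "p \<in> P" "2 \<le> parr p"
    | f where "f \<in> F" "1 \<le> farr f"
    by blast
  then have "RS_ge P F parr farr (T_inf P F parr farr) \<alpha>" for \<alpha> :: "'o::wellorder"
  proof cases
    case 1
    then show ?thesis by (rule RS_ge_T_inf_if_infinite_preds)
  next
    case 2
    then show ?thesis by (rule RS_ge_T_inf_if_infinite_funs)
  next
    case 3
    then show ?thesis by (rule RS_ge_T_inf_if_relation)
  next
    case 4
    then show ?thesis by (rule RS_ge_T_inf_if_function)
  qed
  then show ?thesis
    unfolding if_not_P[OF False] by blast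
qed

end
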